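(* Let $h_1,\dots,h_r$ be positive integers with $h_1+\dots+h_r=n$. Then $$\binom{n}{h_1,\dots,h_r}\le \frac{n^n}{h_r^{h_1}\prod_{i=2}^{r}h_{i-1}^{h_i}}.$$
   Context: $\binom{n}{h_1,\dots,h_r}=\frac{n!}{h_1!\cdots h_r!}$ is the multinomial coefficient. *)

theory Defs
  imports Complex_Main
begin

definition multinomial :: "nat \<Rightarrow> nat \<Rightarrow> (nat \<Rightarrow> nat) \<Rightarrow> real" where
  "multinomial n r h = fact n / (\<Prod>i=1..r. fact (h i))"

end

theory Submission
  imports Defs
begin

text \<open>
  For nonnegative weights \<open>x\<^sub>i\<close>, the term of the multinomial expansion of
  \<open>(x\<^sub>1 + \<dots> + x\<^sub>r)\<^sup>n\<close> with exponents \<open>h\<^sub>i\<close> is at most the whole sum. Choosing the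
  cyclically shifted weights \<open>x\<^sub>1 = h\<^sub>r\<close>, \<open>x\<^sub>i = h\<^sub>i\<^sub>-\<^sub>1\<close>, which again add up to \<open>n\<close>,
  gives the claim.
\<close>

lemma binomial_term_le_power:
  fixes a b :: "'a :: linordered_semidom"
  assumes "a \<ge> 0" "b \<ge> 0" "k \<le> N"
  shows "of_nat (N choose k) * a ^ (N - k) * b ^ k \<le> (a + b) ^ N"
proof -
  have "of_nat (N choose k) * b ^ k * a ^ (N - k) \<le> (\<Sum>j\<le>N. of_nat (N choose j) * b ^ j * a ^ (N - j))"
    by (rule member_le_sum) (use assms in auto)
  also have "\<dots> = (a + b) ^ N"
    by (subst add.commute, rule binomial_ring[symmetric])
  finally show ?thesis by (simp add: mult_ac)
qed

lemma fact_add_eq_choose_mult_fact: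
  "(fact (m + k) :: 'a :: semiring_char_0) = of_nat ((m + k) choose k) * fact m * fact k"
proof -
  have "(fact (m + k) :: nat) = ((m + k) choose k) * fact m * fact k"
    using binomial_fact_lemma[of k "m + k"] by (simp add: mult_ac)
  then have "(of_nat (fact (m + k)) :: 'a) = of_nat (((m + k) choose k) * fact m * fact k)"
    by (rule arg_cong)
  then show ?thesis by simp
qed

lemma multinomial_term_le_power:
  fixes x :: "'i \<Rightarrow> 'a :: linordered_semidom" and h :: "'i \<Rightarrow> nat"
  assumes "finite A" and "\<And>i. i \<in> A \<Longrightarrow> x i \<ge> 0"
  shows "fact (\<Sum>i\<in>A. h i) * (\<Prod>i\<in>A. x i ^ h i)
           \<le> (\<Sum>i\<in>A. x i) ^ (\<Sum>i\<in>A. h i) * (\<Prod>i\<in>A. fact (h i))"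
  using assms
proof (induction A rule: finite_induct)
  case empty
  then show ?case by simp
next
  case (insert j A)
  define m where "m = (\<Sum>i\<in>A. h i)"
  define a where "a = (\<Sum>i\<in>A. x i)"
  define P where "P = (\<Prod>i\<in>A. x i ^ h i)"
  define F where "F = (\<Prod>i\<in>A. (fact (h i) :: 'a))"
  define c where "c = of_nat ((m + h j) choose h j) * fact (h j) * x j ^ h j"
  have "a \<ge> 0" "x j \<ge> 0"
    using insert.prems by (auto simp: a_def intro: sum_nonneg)
  have "F \<ge> 0" "c \<ge> 0"
    using \<open>x j \<ge> 0\<close> by (auto simp: F_def c_def intro: prod_nonneg)
  have IH: "fact m * P \<le> a ^ m * F"
    using insert by (simp add: m_def P_def a_def F_def)
  have "fact (m + h j) * (x j ^ h j * P) = c * (fact m * P)"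
    by (simp add: fact_add_eq_choose_mult_fact c_def mult_ac)
  also have "\<dots> \<le> c * (a ^ m * F)"
    using IH \<open>c \<ge> 0\<close> by (rule mult_left_mono)
  also have "\<dots> = (of_nat ((m + h j) choose h j) * a ^ (m + h j - h j) * x j ^ h j) * (fact (h j) * F)"
    by (simp add: c_def mult_ac)
  also have "\<dots> \<le> (a + x j) ^ (m + h j) * (fact (h j) * F)"
    using binomial_term_le_power[OF \<open>a \<ge> 0\<close> \<open>x j \<ge> 0\<close>, of "h j" "m + h j"] \<open>F \<ge> 0\<close>
    by (intro mult_right_mono) simp_all
  finally show ?case
    using insert.hyps by (simp add: m_def a_def P_def F_def add.commute mult_ac)
qed

definition cyclic_pred :: "nat \<Rightarrow> nat \<Rightarrow> nat" where
  "cyclic_pred r i = (if i = 1 then r else i - 1)"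

lemma bij_betw_cyclic_pred:
  assumes "r \<ge> 1"
  shows "bij_betw (cyclic_pred r) {1..r} {1..r}"
proof (rule bij_betw_imageI)
  show "inj_on (cyclic_pred r) {1..r}"
    by (auto simp: inj_on_def cyclic_pred_def split: if_splits)
  show "cyclic_pred r ` {1..r} = {1..r}"
  proof
    show "cyclic_pred r ` {1..r} \<subseteq> {1..r}"
      using assms by (auto simp: cyclic_pred_def)
    show "{1..r} \<subseteq> cyclic_pred r ` {1..r}"
    proof
      fix j assume j: "j \<in> {1..r}"
      show "j \<in> cyclic_pred r ` {1..r}"
      proof (cases "j = r")
        case True
        then show ?thesis using assms by (auto simp: cyclic_pred_def)
      next
        case False
        then have "cyclic_pred r (j + 1) = j" "j + 1 \<in> {1..r}"
          using j by (auto simp: cyclic_pred_def)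
        then show ?thesis by (metis imageI)
      qed
    qed
  qed
qed

lemma prod_power_cyclic_pred:
  fixes g :: "nat \<Rightarrow> 'a :: comm_monoid_mult" and h :: "nat \<Rightarrow> nat"
  assumes "r \<ge> 1"
  shows "(\<Prod>i=1..r. g (cyclic_pred r i) ^ h i) = g r ^ h 1 * (\<Prod>i=2..r. g (i - 1) ^ h i)"
proof -
  have "{1..r} = insert 1 {2..r}" using assms by auto
  then have "(\<Prod>i=1..r. g (cyclic_pred r i) ^ h i)
               = g r ^ h 1 * (\<Prod>i=2..r. g (cyclic_pred r i) ^ h i)"
    by (simp add: cyclic_pred_def)
  also have "(\<Prod>i=2..r. g (cyclic_pred r i) ^ h i) = (\<Prod>i=2..r. g (i - 1) ^ h i)"
    by (rule prod.cong) (auto simp: cyclic_pred_def)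
  finally show ?thesis .
qed

theorem mainTheorem8:
  fixes h :: "nat \<Rightarrow> nat" and r n :: nat
  assumes "r \<ge> 1"
    and "\<And>i. i \<in> {1..r} \<Longrightarrow> h i > 0"
    and "(\<Sum>i=1..r. h i) = n"
  shows "multinomial n r h \<le>
    real n ^ n / (real (h r) ^ h 1 * (\<Prod>i=2..r. real (h (i - 1)) ^ h i))"
proof -
  define x where "x i = real (h (cyclic_pred r i))" for i
  have bij: "bij_betw (cyclic_pred r) {1..r} {1..r}"
    using assms(1) by (rule bij_betw_cyclic_pred)
  have "(\<Sum>i=1..r. x i) = (\<Sum>i=1..r. real (h i))"
    using sum.reindex_bij_betw[OF bij, of "\<lambda>i. real (h i)"] by (simp add: x_def)
  also have "\<dots> = real n"
    by (simp flip: assms(3))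
  finally have bound: "fact n * (\<Prod>i=1..r. x i ^ h i) \<le> real n ^ n * (\<Prod>i=1..r. fact (h i))"
    using multinomial_term_le_power[of "{1..r}" x h] assms(3) by (simp add: x_def)
  have "(\<Prod>i=1..r. x i ^ h i) > 0"
    using assms(2) bij_betwE[OF bij] by (auto simp: x_def intro!: prod_pos)
  moreover have "(\<Prod>i=1..r. x i ^ h i) = real (h r) ^ h 1 * (\<Prod>i=2..r. real (h (i - 1)) ^ h i)"
    unfolding x_def using assms(1) by (rule prod_power_cyclic_pred)
  moreover have "(\<Prod>i=1..r. (fact (h i) :: real)) > 0"
    by (intro prod_pos) auto
  ultimately show ?thesis
    using bound by (simp add: multinomial_def divide_simps mult_ac)
qed

end
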